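(* Let $n\in\mathbb{N}_0$, $k\in\mathbb{N}$, $x\in\mathbb{R}$ and $\lambda\in\mathbb{C}\setminus\{0\}$. Then $$E_{n}^{\ast(-k)}(x;\lambda)=\frac{k!\,2^{n-k}}{\lambda^{k}}\,y_{3}\!\left(n,k;\lambda^{2};\frac{x+k}{2k},\frac{x-k}{2k}\right).$$
   Context: For $k\in\mathbb{N}_0$ and $\lambda\ne0$, the second kind Apostol type Euler polynomials of order $-k$ are defined by $$\left(\frac{\lambda e^{t}+\lambda^{-1}e^{-t}}{2}\right)^{k}e^{tx}=\sum_{n=0}^{\infty}E_{n}^{\ast(-k)}(x;\lambda)\frac{t^{n}}{n!}.$$ For $a,b\in\mathbb{R}$, $\mu\in\mathbb{C}$, $k\in\mathbb{N}_0$, the numbers $y_3(n,k;\mu;a,b)$ are defined by $\frac{e^{bkt}}{k!}(\mu e^{(a-b)t}+1)^{k}=\sum_{n\ge0}y_{3}(n,k;\mu;a,b)\frac{t^{n}}{n!}$. *)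

theory Defs
  imports Complex_Main "HOL-Computational_Algebra.Formal_Power_Series"
begin

definition apostol_euler2_neg :: "nat \<Rightarrow> nat \<Rightarrow> real \<Rightarrow> complex \<Rightarrow> complex" where
  "apostol_euler2_neg n k x lam =
     fact n * fps_nth
       ((fps_const (1/2) * (fps_const lam * fps_exp 1 + fps_const (inverse lam) * fps_exp (-1))) ^ k
        * fps_exp (complex_of_real x)) n"

definition y3 :: "nat \<Rightarrow> nat \<Rightarrow> complex \<Rightarrow> real \<Rightarrow> real \<Rightarrow> complex" where
  "y3 n k \<mu> a b =
     fact n * fps_nth
       (fps_const (1 / fact k) * fps_exp (complex_of_real (b * real k))
        * (fps_const \<mu> * fps_exp (complex_of_real (a - b)) + 1) ^ k) n"

end

theory Submission
  imports Defs
begin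

text \<open>With \<open>a = (x + k)/(2k)\<close> and \<open>b = (x - k)/(2k)\<close> we have \<open>b k = (x - k)/2\<close> and
  \<open>a - b = 1\<close>, so the generating function of the \<open>y\<^sub>3\<close> numbers is
  \<open>e^((x-k)t/2) (\<lambda>\<^sup>2 e^t + 1)^k / k!\<close>. Pulling \<open>\<lambda> e^(t/2)\<close> out of every factor
  turns it into \<open>\<lambda>^k 2^k / k!\<close> times the generating function of the Euler polynomials
  evaluated at \<open>t/2\<close>; comparing the coefficients of \<open>t^n/n!\<close> gives the theorem.\<close>

definition euler2_neg_gf :: "'a::field_char_0 \<Rightarrow> nat \<Rightarrow> 'a \<Rightarrow> 'a fps" where
  "euler2_neg_gf lam k x =
     (fps_const (1/2) * (fps_const lam * fps_exp 1 + fps_const (inverse lam) * fps_exp (-1))) ^ k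
     * fps_exp x"

lemma apostol_euler2_neg_eq_gf:
  "apostol_euler2_neg n k x lam = fact n * fps_nth (euler2_neg_gf lam k (complex_of_real x)) n"
  by (simp add: apostol_euler2_neg_def euler2_neg_gf_def)

lemma euler2_neg_gf_compose_linear:
  "euler2_neg_gf lam k x oo (fps_const c * fps_X) =
     (fps_const (1/2) * (fps_const lam * fps_exp c + fps_const (inverse lam) * fps_exp (-c))) ^ k
     * fps_exp (c * x)"
proof -
  have c0: "fps_nth (fps_const c * fps_X) 0 = 0" by simp
  show ?thesis
    by (simp add: euler2_neg_gf_def fps_compose_mult_distrib[OF c0]
                  fps_compose_power[OF c0, symmetric] fps_compose_add_distrib)
qed

lemma fps_exp_double_plus_one_factor:
  fixes lam c :: "'a::field_char_0"
  assumes "lam \<noteq> 0"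
  shows "fps_const (lam^2) * fps_exp (2 * c) + 1 =
           fps_const lam * fps_exp c * (fps_const lam * fps_exp c + fps_const (inverse lam) * fps_exp (-c))"
proof -
  have "fps_exp c * fps_exp c = fps_exp (2 * c)"
    by (simp only: mult_2 fps_exp_add_mult)
  moreover have "fps_exp c * fps_exp (-c) = 1"
    by (simp flip: fps_exp_add_mult)
  moreover have "fps_const lam * fps_exp c * (fps_const lam * fps_exp c + fps_const (inverse lam) * fps_exp (-c))
      = fps_const (lam * lam) * (fps_exp c * fps_exp c) + fps_const (lam * inverse lam) * (fps_exp c * fps_exp (-c))"
    unfolding fps_const_mult[symmetric] by algebra
  ultimately show ?thesis
    using assms by (simp add: power2_eq_square)
qed

lemma y3_gf_eq_scaled_euler2_neg_gf:
  fixes lam x :: "'a::field_char_0"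
  assumes "lam \<noteq> 0"
  shows "fps_const (1 / fact k) * fps_exp ((x - of_nat k) / 2) * (fps_const (lam^2) * fps_exp 1 + 1) ^ k
       = fps_const (lam^k * 2^k / fact k) * (euler2_neg_gf lam k x oo (fps_const (1/2) * fps_X))"
proof -
  define P where "P = fps_const lam * fps_exp (1/2) + fps_const (inverse lam) * fps_exp (- (1/2))"
  have "fps_const (lam^2) * fps_exp 1 + 1 = fps_const lam * fps_exp (1/2) * P"
    using fps_exp_double_plus_one_factor[OF assms, of "1/2"] by (simp add: P_def)
  then have pow: "(fps_const (lam^2) * fps_exp 1 + 1) ^ k = fps_const (lam^k) * fps_exp (of_nat k / 2) * P ^ k"
    by (simp only: power_mult_distrib fps_const_power fps_exp_power_mult times_divide_eq_right mult_1_right)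
  have exp: "fps_exp ((x - of_nat k) / 2) * fps_exp (of_nat k / 2) = fps_exp (x / 2)"
    unfolding fps_exp_add_mult[symmetric] by (simp add: diff_divide_distrib)
  have "fps_const (1 / fact k) * fps_exp ((x - of_nat k) / 2) * (fps_const (lam^2) * fps_exp 1 + 1) ^ k
      = fps_const (1 / fact k) * fps_const (lam^k) * (fps_exp ((x - of_nat k) / 2) * fps_exp (of_nat k / 2)) * P ^ k"
    unfolding pow by (simp only: mult_ac)
  also have "\<dots> = fps_const (lam^k * 2^k / fact k * (1/2)^k) * (P ^ k * fps_exp (x / 2))"
    unfolding exp by (simp add: mult_ac power_one_over)
  also have "\<dots> = fps_const (lam^k * 2^k / fact k) * ((fps_const (1/2) * P) ^ k * fps_exp (x / 2))"
    by (simp add: power_mult_distrib mult_ac)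
  finally show ?thesis
    by (simp add: euler2_neg_gf_compose_linear P_def)
qed

theorem mainTheorem6:
  fixes n k :: nat and x :: real and lam :: complex
  assumes "k \<ge> 1" and "lam \<noteq> 0"
  shows "apostol_euler2_neg n k x lam =
    fact k * (2::complex) powi (int n - int k) / lam ^ k *
      y3 n k (lam^2) ((x + real k) / (2 * real k)) ((x - real k) / (2 * real k))"
proof -
  have "complex_of_real ((x - real k) / (2 * real k) * real k) = (complex_of_real x - of_nat k) / 2"
   and "complex_of_real ((x + real k) / (2 * real k) - (x - real k) / (2 * real k)) = 1"
    using assms(1) by (simp_all add: field_simps)
  then have y3_eq: "y3 n k (lam^2) ((x + real k) / (2 * real k)) ((x - real k) / (2 * real k))
      = fact n * (lam^k * 2^k / fact k * ((1/2)^n * fps_nth (euler2_neg_gf lam k (complex_of_real x)) n))"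
    unfolding y3_def by (simp only: y3_gf_eq_scaled_euler2_neg_gf[OF assms(2)] fps_mult_left_const_nth
        fps_compose_linear fps_nth_Abs_fps)
  have powi_eq: "(2::complex) powi (int n - int k) = 2^n / 2^k"
    by (simp add: power_int_diff)
  show ?thesis
    unfolding apostol_euler2_neg_eq_gf y3_eq powi_eq using assms(2) by (simp add: field_simps power_one_over)
qed

end
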